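(* Let $n,m_1,m_2$ be positive integers with $m_2 \geq n \geq \lceil \log m_1 \rceil+\lceil \log m_2 \rceil+1$. Then $R(C_{n},K_{m_1,m_2})\leq 33m_1+49m_2$.
   Context: $C_n$ is the cycle on $n$ vertices and $K_{a,b}$ the complete bipartite graph with parts of sizes $a$ and $b$. $R(G_1,G_2)$ is the smallest $N$ such that every red/blue coloring of the edges of $K_N$ contains a red copy of $G_1$ or a blue copy of $G_2$. $\log$ denotes the logarithm to base $2$. *)

theory Defs
  imports Complex_Main
begin

text \<open>A red/blue colouring of the edges of the complete graph K_N on vertex set {0..<N}
  is represented by a symmetric predicate red; an edge {u,v} (u \<noteq> v) is blue iff it is not red.\<close>

definition red_blue_colouring :: "nat \<Rightarrow> (nat \<Rightarrow> nat \<Rightarrow> bool) \<Rightarrow> bool" where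
  "red_blue_colouring N red \<longleftrightarrow> (\<forall>u<N. \<forall>v<N. red u v = red v u)"

definition has_red_cycle :: "nat \<Rightarrow> (nat \<Rightarrow> nat \<Rightarrow> bool) \<Rightarrow> nat \<Rightarrow> bool" where
  "has_red_cycle N red n \<longleftrightarrow>
     (\<exists>vs :: nat list. length vs = n \<and> distinct vs \<and> set vs \<subseteq> {0..<N} \<and>
        (\<forall>i<n. red (vs ! i) (vs ! ((i + 1) mod n))))"

definition has_blue_Kab :: "nat \<Rightarrow> (nat \<Rightarrow> nat \<Rightarrow> bool) \<Rightarrow> nat \<Rightarrow> nat \<Rightarrow> bool" where
  "has_blue_Kab N red a b \<longleftrightarrow>
     (\<exists>A B. A \<subseteq> {0..<N} \<and> B \<subseteq> {0..<N} \<and> A \<inter> B = {} \<and> card A = a \<and> card B = b \<and>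
        (\<forall>x\<in>A. \<forall>y\<in>B. \<not> red x y))"

definition ramsey_cycle_Kab :: "nat \<Rightarrow> nat \<Rightarrow> nat \<Rightarrow> nat" where
  "ramsey_cycle_Kab n a b =
     (LEAST N. \<forall>red. red_blue_colouring N red \<longrightarrow> has_red_cycle N red n \<or> has_blue_Kab N red a b)"

end

(*
  Suppose a colouring of K_N with N = 33 m1 + 49 m2 has no blue K_{m1,m2}, i.e. any two
  disjoint vertex sets of sizes m1 and m2 span a red edge. Depth-first search then finds a red
  path covering all but m1 + m2 vertices of any vertex set. In two further blocks, deleting a
  maximal set with few red neighbours leaves sets U1, U2 in which every small set T has at
  least 4|T| red neighbours; growing red trees level by level inside U1 and U2 reaches at least
  m1 (resp. m2) vertices at depth ceil(log m1) (resp. ceil(log m2) - 1). All but fewer than m1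
  vertices of the long path have a red neighbour in U1, and likewise for U2, so a segment of
  the path of any prescribed length links roots u1 in U1 and u2 in U2. A red edge between the
  two sets of tree leaves then closes a red cycle of length exactly n.
*)

theory Submission
  imports Defs "HOL-Library.Log_Nat"
begin

definition red_path :: "('a \<Rightarrow> 'a \<Rightarrow> bool) \<Rightarrow> 'a set \<Rightarrow> 'a list \<Rightarrow> bool" where
  "red_path red B vs \<longleftrightarrow> distinct vs \<and> set vs \<subseteq> B \<and> successively red vs"

lemma red_path_mono: "red_path red B vs \<Longrightarrow> B \<subseteq> B' \<Longrightarrow> red_path red B' vs"
  unfolding red_path_def by blast

lemma red_path_snoc:
  assumes "red_path red B vs" "vs \<noteq> []" "red (last vs) x" "x \<notin> set vs"
  shows "red_path red (insert x B) (vs @ [x])"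
  using assms by (auto simp: red_path_def successively_append_iff)

lemma red_path_rev:
  assumes "red_path red B vs" "\<And>u v. u \<in> B \<Longrightarrow> v \<in> B \<Longrightarrow> red u v = red v u"
  shows "red_path red B (rev vs)"
proof -
  have path: "successively red vs" and sub: "set vs \<subseteq> B"
    using assms(1) by (simp_all add: red_path_def)
  have "successively (\<lambda>x y. red y x) vs"
    using path by (rule successively_mono) (use sub assms(2) in blast)
  then show ?thesis using assms(1) by (simp add: red_path_def)
qed

lemma has_red_cycleI:
  assumes path: "red_path red {0..<N} vs" and len: "length vs = n" and "vs \<noteq> []"
    and closing: "red (last vs) (hd vs)"
  shows "has_red_cycle N red n"
proof -
  have "red (vs ! i) (vs ! ((i + 1) mod n))" if "i < n" for i
  proof (cases "Suc i < n")
    case True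
    then show ?thesis using path len by (simp add: red_path_def successively_nth)
  next
    case False
    with \<open>i < n\<close> have "Suc i = n" by simp
    then have "i = n - 1" "(i + 1) mod n = 0" by auto
    then show ?thesis
      using closing len \<open>vs \<noteq> []\<close> by (simp add: last_conv_nth hd_conv_nth)
  qed
  then show ?thesis
    using path len unfolding has_red_cycle_def red_path_def by blast
qed

lemma exists_window_avoiding:
  fixes Q1 Q2 :: "nat set"
  assumes "finite Q1" "finite Q2" "card Q1 + card Q2 + c < L"
  shows "\<exists>j. j + c < L \<and> j \<notin> Q1 \<and> j + c \<notin> Q2"
proof -
  define A where "A = {j. j + c \<in> Q2}"
  have "A = (\<lambda>j. j - c) ` (Q2 \<inter> {c..})" unfolding A_def by (force simp: image_iff)
  then have fA: "finite A" and cA: "card A \<le> card Q2"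
    using assms(2) card_image_le[of "Q2 \<inter> {c..}" "\<lambda>j. j - c"] card_mono[of Q2 "Q2 \<inter> {c..}"]
    by (auto intro: order_trans)
  have "\<not> {..<L - c} \<subseteq> Q1 \<union> A"
  proof
    assume "{..<L - c} \<subseteq> Q1 \<union> A"
    then have "card {..<L - c} \<le> card (Q1 \<union> A)" using assms(1) fA by (intro card_mono) auto
    also have "\<dots> \<le> card Q1 + card A" by (rule card_Un_le)
    finally show False using cA assms(3) by simp
  qed
  then obtain j where "j < L - c" "j \<notin> Q1" "j \<notin> A" by blast
  then show ?thesis unfolding A_def by (intro exI[of _ j]) auto
qed

definition tree_size :: "nat \<Rightarrow> nat" where
  "tree_size D = (if D = 0 then 1 else 2 ^ (D + 1))"

lemma two_power_le_tree_size: "2 ^ D \<le> tree_size D"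
  unfolding tree_size_def by simp

lemma tree_size_le: "tree_size D \<le> 2 ^ (D + 1)"
  unfolding tree_size_def by simp

lemma tree_size_Suc: "2 * tree_size D \<le> tree_size (Suc D)" "tree_size (Suc D) \<le> 3 * tree_size D + 1"
  unfolding tree_size_def by simp_all

locale no_blue_Kab =
  fixes N :: nat and red :: "nat \<Rightarrow> nat \<Rightarrow> bool" and m1 m2 :: nat
  assumes red_sym: "u < N \<Longrightarrow> v < N \<Longrightarrow> red u v = red v u"
    and red_edge_between: "X \<subseteq> {0..<N} \<Longrightarrow> Y \<subseteq> {0..<N} \<Longrightarrow> X \<inter> Y = {} \<Longrightarrow>
      m1 \<le> card X \<Longrightarrow> m2 \<le> card Y \<Longrightarrow> \<exists>x\<in>X. \<exists>y\<in>Y. red x y"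

lemma no_blue_KabI:
  assumes "red_blue_colouring N red" "\<not> has_blue_Kab N red m1 m2"
  shows "no_blue_Kab N red m1 m2"
proof
  show "red u v = red v u" if "u < N" "v < N" for u v
    using assms(1) that unfolding red_blue_colouring_def by blast
next
  fix X Y assume XY: "X \<subseteq> {0..<N}" "Y \<subseteq> {0..<N}" "X \<inter> Y = {}" "m1 \<le> card X" "m2 \<le> card Y"
  obtain X0 where X0: "X0 \<subseteq> X" "card X0 = m1" using obtain_subset_with_card_n[OF XY(4)] by metis
  obtain Y0 where Y0: "Y0 \<subseteq> Y" "card Y0 = m2" using obtain_subset_with_card_n[OF XY(5)] by metis
  have sub: "X0 \<subseteq> {0..<N}" "Y0 \<subseteq> {0..<N}" "X0 \<inter> Y0 = {}" using X0 Y0 XY by auto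
  have "\<not> (\<forall>x\<in>X0. \<forall>y\<in>Y0. \<not> red x y)"
  proof
    assume "\<forall>x\<in>X0. \<forall>y\<in>Y0. \<not> red x y"
    then have "has_blue_Kab N red m1 m2"
      unfolding has_blue_Kab_def using sub X0(2) Y0(2) by (intro exI[of _ X0] exI[of _ Y0]) simp
    with assms(2) show False ..
  qed
  then show "\<exists>x\<in>X. \<exists>y\<in>Y. red x y" using X0 Y0 by blast
qed

context no_blue_Kab
begin

text \<open>A state of depth-first search in V: S are the finished vertices (at most m1 of them),
  T is the stack, and finished vertices have no red edge to unvisited ones. The search never
  gets stuck before m1 vertices are finished, since popping or pushing increases 2|S| + |T|.\<close>

definition dfs_state :: "nat set \<Rightarrow> nat set \<Rightarrow> nat list \<Rightarrow> bool" where
  "dfs_state V S T \<longleftrightarrow> S \<subseteq> V \<and> S \<inter> set T = {} \<and> red_path red V T \<and> card S \<le> m1 \<and>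
     (\<forall>s\<in>S. \<forall>u\<in>V - S - set T. \<not> red s u)"

lemma dfs_state_step:
  assumes V: "V \<subseteq> {0..<N}" "m1 \<le> card V" and st: "dfs_state V S T" and S: "card S < m1"
  shows "\<exists>S' T'. dfs_state V S' T' \<and> 2 * card S + length T < 2 * card S' + length T'"
proof -
  have SV: "S \<subseteq> V" and disj: "S \<inter> set T = {}" and path: "red_path red V T"
    and sep: "\<forall>s\<in>S. \<forall>u\<in>V - S - set T. \<not> red s u"
    using st unfolding dfs_state_def by auto
  have fS: "finite S" using SV V(1) by (auto intro: finite_subset)
  show ?thesis
  proof (cases T rule: rev_cases)
    case Nil
    have "\<not> V \<subseteq> S"
    proof
      assume "V \<subseteq> S"
      then have "card V \<le> card S" by (rule card_mono[OF fS])
      with V(2) S show False by simp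
    qed
    then obtain u where u: "u \<in> V" "u \<notin> S" by blast
    have "dfs_state V S [u]"
      using SV S sep u Nil unfolding dfs_state_def red_path_def by simp
    then show ?thesis using Nil by (intro exI[of _ S] exI[of _ "[u]"]) simp
  next
    case (snoc T0 t)
    show ?thesis
    proof (cases "\<exists>u\<in>V - S - set T. red t u")
      case True
      then obtain u where u: "u \<in> V - S - set T" "red t u" by blast
      have "red_path red (insert u V) (T @ [u])"
        using red_path_snoc[OF path] u snoc by simp
      then have "dfs_state V S (T @ [u])"
        using st u(1) unfolding dfs_state_def by (simp add: insert_absorb Int_insert_right)
      then show ?thesis by (intro exI[of _ S] exI[of _ "T @ [u]"]) simp
    next
      case False
      have t: "t \<in> V" "t \<notin> S" "t \<notin> set T0" "red_path red V T0"
        using path disj snoc unfolding red_path_def by (auto simp: successively_append_iff)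
      have "\<forall>s\<in>insert t S. \<forall>u\<in>V - insert t S - set T0. \<not> red s u"
        using sep False snoc by auto
      then have "dfs_state V (insert t S) T0"
        using SV disj S t fS snoc unfolding dfs_state_def by auto
      moreover have "2 * card S + length T < 2 * card (insert t S) + length T0"
        using snoc t fS by simp
      ultimately show ?thesis by blast
    qed
  qed
qed

lemma exists_finished_dfs_state:
  assumes V: "V \<subseteq> {0..<N}" "m1 \<le> card V"
  shows "\<exists>S T. dfs_state V S T \<and> card S = m1"
proof -
  have fV: "finite V" using V(1) by (rule finite_subset) simp
  define weight :: "nat set \<times> nat list \<Rightarrow> nat" where "weight = (\<lambda>(S, T). 2 * card S + length T)"
  have bound: "weight (S, T) < 2 * m1 + card V + 1" if "dfs_state V S T" for S T
  proof -
    have "length T \<le> card V"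
      using that distinct_card[of T] card_mono[OF fV, of "set T"]
      unfolding dfs_state_def red_path_def by auto
    then show ?thesis using that unfolding dfs_state_def weight_def by simp
  qed
  have "dfs_state V {} []" unfolding dfs_state_def red_path_def by simp
  then have "\<exists>x. case_prod (dfs_state V) x \<and> (\<forall>y. case_prod (dfs_state V) y \<longrightarrow> weight y \<le> weight x)"
    by (intro ex_has_greatest_nat[of _ "({}, [])" _ "2 * m1 + card V + 1"]) (use bound in auto)
  then obtain S T where st: "dfs_state V S T"
    and max: "\<And>S' T'. dfs_state V S' T' \<Longrightarrow> weight (S', T') \<le> weight (S, T)"
    by fastforce
  have "card S = m1"
  proof (rule ccontr)
    assume "card S \<noteq> m1"
    then have "card S < m1" using st unfolding dfs_state_def by simp
    then obtain S' T' where "dfs_state V S' T'" "weight (S, T) < weight (S', T')"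
      using dfs_state_step[OF V st] unfolding weight_def by auto
    with max show False by fastforce
  qed
  with st show ?thesis by blast
qed

text \<open>Off the stack of a finished state lie the m1 finished vertices and fewer than m2
  unvisited ones, since the finished vertices have no red edge to the unvisited ones.\<close>

lemma long_red_path:
  assumes V: "V \<subseteq> {0..<N}" "m1 \<le> card V"
  shows "\<exists>T. red_path red V T \<and> card V < length T + m1 + m2"
proof -
  have fV: "finite V" using V(1) by (rule finite_subset) simp
  obtain S T where st: "dfs_state V S T" and cS: "card S = m1"
    using exists_finished_dfs_state[OF V] by blast
  have SV: "S \<subseteq> V" and path: "red_path red V T" and sep: "\<forall>s\<in>S. \<forall>u\<in>V - S - set T. \<not> red s u"
    using st unfolding dfs_state_def by auto
  define U where "U = V - S - set T"
  have "card U < m2"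
  proof (rule ccontr)
    assume "\<not> card U < m2"
    moreover have "S \<subseteq> {0..<N}" "U \<subseteq> {0..<N}" "S \<inter> U = {}"
      using SV V(1) unfolding U_def by auto
    ultimately obtain x y where "x \<in> S" "y \<in> U" "red x y"
      using red_edge_between[of S U] cS by auto
    with sep show False unfolding U_def by blast
  qed
  have "V \<subseteq> S \<union> set T \<union> U" unfolding U_def by auto
  then have "card V \<le> card (S \<union> set T \<union> U)"
    by (rule card_mono[rotated]) (use finite_subset[OF SV fV] fV in \<open>simp add: U_def\<close>)
  also have "\<dots> \<le> card S + card (set T) + card U"
    by (meson card_Un_le add_le_mono1 order_trans)
  also have "card (set T) = length T"
    using path unfolding red_path_def by (simp add: distinct_card)
  finally show ?thesis using path cS \<open>card U < m2\<close> by auto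
qed

definition red_nbhd :: "nat set \<Rightarrow> nat set \<Rightarrow> nat set" where
  "red_nbhd U T = {v \<in> U - T. \<exists>t\<in>T. red t v}"

definition expanding :: "nat set \<Rightarrow> nat \<Rightarrow> bool" where
  "expanding U E \<longleftrightarrow>
     (\<forall>T \<subseteq> U. T \<noteq> {} \<longrightarrow> card T \<le> E \<longrightarrow> 4 * card T \<le> card (red_nbhd U T))"

lemma red_nbhd_subset: "red_nbhd U T \<subseteq> U - T"
  unfolding red_nbhd_def by auto

lemma finite_red_nbhd: "finite U \<Longrightarrow> finite (red_nbhd U T)"
  unfolding red_nbhd_def by simp

definition poorly_expanding :: "nat set \<Rightarrow> nat \<Rightarrow> nat set \<Rightarrow> bool" where
  "poorly_expanding W K S \<longleftrightarrow> S \<subseteq> W \<and> card S \<le> K \<and> card (red_nbhd W S) \<le> 4 * card S"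

text \<open>If a small T in the remainder U had fewer than 4|T| red neighbours in U, then S \<union> T
  would be a larger poorly expanding set.\<close>

lemma expanding_outside_maximal:
  assumes fW: "finite W" and S: "poorly_expanding W K S" and cS: "card S + E \<le> K"
    and S_max: "\<And>S'. poorly_expanding W K S' \<Longrightarrow> card S' \<le> card S"
  shows "expanding (W - S - red_nbhd W S) E"
  unfolding expanding_def
proof (intro allI impI)
  define U where "U = W - S - red_nbhd W S"
  have SW: "S \<subseteq> W" and cNS: "card (red_nbhd W S) \<le> 4 * card S"
    using S unfolding poorly_expanding_def by auto
  have fS: "finite S" using finite_subset[OF SW fW] .
  fix T assume TU: "T \<subseteq> W - S - red_nbhd W S" and "T \<noteq> {}" and cT: "card T \<le> E"
  have fT: "finite T" using finite_subset[OF TU] fW by simp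
  with \<open>T \<noteq> {}\<close> have "card T > 0" by auto
  have disj: "S \<inter> T = {}" using TU by auto
  show "4 * card T \<le> card (red_nbhd U T)"
  proof (rule ccontr)
    assume few: "\<not> 4 * card T \<le> card (red_nbhd U T)"
    have "red_nbhd W (S \<union> T) \<subseteq> red_nbhd W S \<union> red_nbhd U T"
      using TU unfolding red_nbhd_def U_def by auto
    then have "card (red_nbhd W (S \<union> T)) \<le> card (red_nbhd W S \<union> red_nbhd U T)"
      by (rule card_mono[rotated]) (use fW in \<open>simp add: finite_red_nbhd U_def\<close>)
    also have "\<dots> \<le> card (red_nbhd W S) + card (red_nbhd U T)" by (rule card_Un_le)
    also have "\<dots> \<le> 4 * card (S \<union> T)" using few cNS card_Un_disjoint[OF fS fT disj] by linarith
    finally have "poorly_expanding W K (S \<union> T)"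
      unfolding poorly_expanding_def using card_Un_disjoint[OF fS fT disj] cS cT SW TU by auto
    then have "card (S \<union> T) \<le> card S" by (rule S_max)
    then show False using card_Un_disjoint[OF fS fT disj] \<open>card T > 0\<close> by linarith
  qed
qed

text \<open>For a maximal poorly expanding S of size at most m1 + E, the remaining set U is large;
  as S has no red edge into U, this forces |S| < m1.\<close>

lemma expanding_subset:
  assumes W: "W \<subseteq> {0..<N}" and cW: "5 * (m1 + E) + m2 \<le> card W"
  shows "\<exists>U \<subseteq> W. 5 * E + m2 \<le> card U \<and> expanding U E"
proof -
  have fW: "finite W" using W(1) by (rule finite_subset) simp
  have "poorly_expanding W (m1 + E) {}" unfolding poorly_expanding_def red_nbhd_def by simp
  then obtain S where S: "poorly_expanding W (m1 + E) S"
    and S_max: "\<And>S'. poorly_expanding W (m1 + E) S' \<Longrightarrow> card S' \<le> card S"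
    using ex_has_greatest_nat[of "poorly_expanding W (m1 + E)" "{}" card "Suc (m1 + E)"]
    unfolding poorly_expanding_def by fastforce
  have SW: "S \<subseteq> W" and cS_bound: "card S \<le> m1 + E" and cNS: "card (red_nbhd W S) \<le> 4 * card S"
    using S unfolding poorly_expanding_def by auto
  define U where "U = W - S - red_nbhd W S"
  have cW_le: "card W \<le> card U + 5 * card S"
  proof -
    have "card W \<le> card (U \<union> (S \<union> red_nbhd W S))"
      by (rule card_mono) (use fW finite_subset[OF SW fW] in \<open>auto simp: U_def finite_red_nbhd\<close>)
    also have "\<dots> \<le> card U + (card S + card (red_nbhd W S))"
      by (meson card_Un_le add_le_mono le_refl order_trans)
    finally show ?thesis using cNS by linarith
  qed
  have cS: "card S < m1"
  proof (rule ccontr)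
    assume "\<not> card S < m1"
    moreover have "m2 \<le> card U" using cW_le cS_bound cW[unfolded distrib_left] by linarith
    moreover have "S \<subseteq> {0..<N}" "U \<subseteq> {0..<N}" "S \<inter> U = {}" using W SW unfolding U_def by auto
    ultimately obtain x y where "x \<in> S" "y \<in> U" "red x y" using red_edge_between[of S U] by auto
    then show False unfolding U_def red_nbhd_def by auto
  qed
  have "expanding U E"
    unfolding U_def using fW S cS S_max by (intro expanding_outside_maximal) auto
  moreover have "5 * E + m2 \<le> card U" using cW_le cS cW[unfolded distrib_left] by linarith
  moreover have "U \<subseteq> W" unfolding U_def by auto
  ultimately show ?thesis by blast
qed

text \<open>X is the last level of a red tree B of depth D rooted at r.\<close>

definition red_tree_level :: "nat set \<Rightarrow> nat \<Rightarrow> nat \<Rightarrow> nat set \<Rightarrow> nat set \<Rightarrow> bool" where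
  "red_tree_level U r D X B \<longleftrightarrow> X \<subseteq> B \<and> B \<subseteq> U \<and> card X = tree_size D \<and> card B < 2 * card X \<and>
     (\<forall>x\<in>X. \<exists>vs. red_path red B vs \<and> length vs = Suc D \<and> hd vs = r \<and> last vs = x)"

text \<open>As B has fewer than 2|X| vertices, the at least 4|X| red neighbours of X include
  3|X| + 1 vertices outside B, enough for the next level.\<close>

lemma red_tree_level_Suc:
  assumes fU: "finite U" and U: "expanding U E" and lvl: "red_tree_level U r D X B"
    and E: "tree_size D \<le> E"
  shows "\<exists>X' B'. red_tree_level U r (Suc D) X' B'"
proof -
  have XB: "X \<subseteq> B" "B \<subseteq> U" "card X = tree_size D" "card B < 2 * card X"
    and paths: "\<forall>x\<in>X. \<exists>vs. red_path red B vs \<and> length vs = Suc D \<and> hd vs = r \<and> last vs = x"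
    using lvl unfolding red_tree_level_def by auto
  have fB: "finite B" using finite_subset[OF XB(2) fU] .
  have fX: "finite X" using finite_subset[OF XB(1) fB] .
  have "X \<noteq> {}" using XB(3) two_power_le_tree_size[of D] by (metis card.empty le_zero_eq power_not_zero zero_neq_numeral)
  moreover have "X \<subseteq> U" "card X \<le> E" using XB(1-3) E by auto
  ultimately have grow: "4 * card X \<le> card (red_nbhd U X)"
    using U unfolding expanding_def by blast
  define C where "C = red_nbhd U X - B"
  have "red_nbhd U X \<subseteq> C \<union> (B - X)" using red_nbhd_subset[of U X] unfolding C_def by auto
  then have "card (red_nbhd U X) \<le> card (C \<union> (B - X))"
    by (rule card_mono[rotated]) (use fB finite_red_nbhd[OF fU] in \<open>simp add: C_def\<close>)
  also have "\<dots> \<le> card C + (card B - card X)"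
    using card_Un_le[of C "B - X"] card_Diff_subset[OF fX XB(1)] by simp
  finally have big: "tree_size (Suc D) \<le> card C"
    using grow XB(3,4) tree_size_Suc(2)[of D] by linarith
  obtain X' where X': "X' \<subseteq> C" "card X' = tree_size (Suc D)" "finite X'"
    by (rule obtain_subset_with_card_n[OF big])
  have X'_new: "X' \<subseteq> red_nbhd U X" "B \<inter> X' = {}" using X' unfolding C_def by auto
  define B' where "B' = B \<union> X'"
  have "X' \<subseteq> B'" "B' \<subseteq> U" unfolding B'_def using XB(2) X'_new(1) red_nbhd_subset[of U X] by auto
  moreover have "card B' < 2 * card X'"
    using card_Un_disjoint[OF fB X'(3) X'_new(2)] XB(3,4) X'(2) tree_size_Suc(1)[of D]
    unfolding B'_def by linarith
  moreover have "\<exists>vs. red_path red B' vs \<and> length vs = Suc (Suc D) \<and> hd vs = r \<and> last vs = x'"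
    if x': "x' \<in> X'" for x'
  proof -
    obtain x where x: "x \<in> X" "red x x'" using x' X'_new(1) unfolding red_nbhd_def by auto
    then obtain vs where vs: "red_path red B vs" "length vs = Suc D" "hd vs = r" "last vs = x"
      using paths x(1) by blast
    have "vs \<noteq> []" using vs(2) by auto
    moreover have "x' \<notin> set vs" using vs(1) X'_new(2) x' unfolding red_path_def by auto
    ultimately have "red_path red (insert x' B) (vs @ [x'])"
      using red_path_snoc[OF vs(1)] vs(4) x(2) by simp
    then have "red_path red B' (vs @ [x'])"
      by (rule red_path_mono) (use x' in \<open>auto simp: B'_def\<close>)
    then show ?thesis using vs(2,3) \<open>vs \<noteq> []\<close> by (intro exI[of _ "vs @ [x']"]) simp
  qed
  ultimately have "red_tree_level U r (Suc D) X' B'"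
    using X'(2) unfolding red_tree_level_def by simp
  then show ?thesis by blast
qed

lemma red_tree:
  assumes fU: "finite U" and U: "expanding U E" and r: "r \<in> U" and D: "2 ^ D \<le> E"
  shows "\<exists>X B. red_tree_level U r D X B"
  using D
proof (induction D)
  case 0
  have "red_path red {r} [r]" unfolding red_path_def by simp
  then have "red_tree_level U r 0 {r} {r}" using r unfolding red_tree_level_def tree_size_def by auto
  then show ?case by blast
next
  case (Suc D)
  have "(2::nat) ^ D \<le> 2 ^ Suc D" by simp
  then obtain X B where "red_tree_level U r D X B" using Suc by (meson order_trans)
  moreover have "tree_size D \<le> E" using tree_size_le[of D] Suc.prems by simp
  ultimately show ?case using red_tree_level_Suc[OF fU U] by blast
qed

lemma few_indices_without_red_edge:
  assumes q: "red_path red V q" and V: "V \<subseteq> {0..<N}" and U: "U \<subseteq> {0..<N}" "V \<inter> U = {}" "m2 \<le> card U"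
  shows "card {i. i < length q \<and> (\<forall>u\<in>U. \<not> red (q ! i) u)} < m1"
proof (rule ccontr)
  define Q where "Q = {i. i < length q \<and> (\<forall>u\<in>U. \<not> red (q ! i) u)}"
  assume "\<not> card {i. i < length q \<and> (\<forall>u\<in>U. \<not> red (q ! i) u)} < m1"
  then have "m1 \<le> card ((!) q ` Q)"
    using q unfolding Q_def red_path_def
    by (subst card_image) (auto simp: inj_on_def nth_eq_iff_index_eq)
  moreover have "(!) q ` Q \<subseteq> V" using q unfolding Q_def red_path_def by auto
  ultimately obtain x y where "x \<in> (!) q ` Q" "y \<in> U" "red x y"
    using red_edge_between[of "(!) q ` Q" U] V U by blast
  then show False unfolding Q_def by auto
qed

lemma red_stem:
  assumes q: "red_path red V q" and V: "V \<subseteq> {0..<N}"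
    and U1: "U1 \<subseteq> {0..<N}" "V \<inter> U1 = {}" "m1 \<le> card U1" "m2 \<le> card U1"
    and U2: "U2 \<subseteq> {0..<N}" "V \<inter> U2 = {}" "m2 \<le> card U2" and U12: "U1 \<inter> U2 = {}"
    and s: "1 \<le> s" and len: "2 * m1 + s \<le> length q"
  shows "\<exists>u1 u2 mid. u1 \<in> U1 \<and> u2 \<in> U2 \<and> length mid = s - 1 \<and> red_path red V mid \<and>
    successively red (u1 # mid @ [u2])"
proof (cases "s = 1")
  case True
  obtain u1 u2 where "u1 \<in> U1" "u2 \<in> U2" "red u1 u2"
    using red_edge_between[OF U1(1) U2(1) U12 U1(3) U2(3)] by blast
  moreover have "red_path red V []" unfolding red_path_def by simp
  ultimately show ?thesis using True by (intro exI[of _ u1] exI[of _ u2] exI[of _ "[]"]) simp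
next
  case False
  with s have "\<exists>c. s = c + 2" by presburger
  then obtain c where c: "s = c + 2" by blast
  define Q1 where "Q1 = {i. i < length q \<and> (\<forall>u\<in>U1. \<not> red (q ! i) u)}"
  define Q2 where "Q2 = {i. i < length q \<and> (\<forall>u\<in>U2. \<not> red (q ! i) u)}"
  have "card Q1 < m1" "card Q2 < m1"
    unfolding Q1_def Q2_def
    using few_indices_without_red_edge[OF q V U1(1,2,4)] few_indices_without_red_edge[OF q V U2]
    by simp_all
  then have "card Q1 + card Q2 + c < length q" using len c by linarith
  moreover have "finite Q1" "finite Q2" unfolding Q1_def Q2_def by auto
  ultimately obtain j where j: "j + c < length q" "j \<notin> Q1" "j + c \<notin> Q2"
    using exists_window_avoiding by blast
  obtain u1 where u1: "u1 \<in> U1" "red (q ! j) u1" using j unfolding Q1_def by auto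
  obtain u2 where u2: "u2 \<in> U2" "red (q ! (j + c)) u2" using j unfolding Q2_def by auto
  define mid where "mid = take (Suc c) (drop j q)"
  have len_mid: "length mid = Suc c" using j(1) unfolding mid_def by simp
  then have ne: "mid \<noteq> []" by auto
  have mid_nth: "mid ! i = q ! (j + i)" if "i \<le> c" for i
    using that j(1) unfolding mid_def by simp
  have ends: "hd mid = q ! j" "last mid = q ! (j + c)"
    using mid_nth[of 0] mid_nth[of c] len_mid by (simp_all add: hd_conv_nth[OF ne] last_conv_nth[OF ne])
  have mid: "red_path red V mid"
    using q unfolding red_path_def mid_def successively_conv_nth
    by (auto dest: in_set_takeD in_set_dropD)
  have "q ! j \<in> V" using q j(1) unfolding red_path_def by auto
  then have "q ! j < N" "u1 < N" using V u1(1) U1(1) by auto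
  then have "red u1 (q ! j)" using u1(2) red_sym by simp
  then have "successively red (u1 # mid @ [u2])"
    using mid ne ends u2(2) unfolding red_path_def by (simp add: successively_append_iff successively_Cons)
  then show ?thesis using u1(1) u2(1) len_mid mid c by (intro exI[of _ u1] exI[of _ u2] exI[of _ mid]) simp
qed

lemma has_red_cycle_of_paths:
  assumes px: "red_path red {0..<N} px" "px \<noteq> []" "hd px = u1" "last px = x"
    and py: "red_path red {0..<N} py" "py \<noteq> []" "hd py = u2" "last py = y"
    and mid: "red_path red {0..<N} mid" "successively red (u1 # mid @ [u2])"
    and disj: "set px \<inter> set mid = {}" "set px \<inter> set py = {}" "set mid \<inter> set py = {}"
    and xy: "red x y"
  shows "has_red_cycle N red (length px + length mid + length py)"
proof (rule has_red_cycleI)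
  define cyc where "cyc = rev px @ mid @ py"
  have rev_px: "red_path red {0..<N} (rev px)"
    by (rule red_path_rev[OF px(1)]) (simp add: red_sym)
  obtain py' where py_eq: "py = u2 # py'" using py(2,3) by (cases py) auto
  have "successively red ((u1 # mid @ [u2]) @ py')"
    using py(1) unfolding py_eq red_path_def
    by (subst successively_append_iff) (use mid(2) in \<open>auto simp: successively_Cons\<close>)
  then have "successively red (u1 # (mid @ py))" unfolding py_eq by simp
  then have "successively red (mid @ py)" "red u1 (hd (mid @ py))"
    using py(2) by (simp_all add: successively_Cons)
  then have "successively red cyc"
    using rev_px px(2,3) unfolding cyc_def red_path_def
    by (simp add: successively_append_iff last_rev)
  then show "red_path red {0..<N} cyc"
    using rev_px mid(1) py(1) disj unfolding cyc_def red_path_def by auto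
  show "length cyc = length px + length mid + length py" unfolding cyc_def by simp
  show "cyc \<noteq> []" unfolding cyc_def using py(2) by simp
  have "x \<in> set px" "y \<in> set py" using px(2,4) py(2,4) by auto
  then have "x < N" "y < N" using px(1) py(1) unfolding red_path_def by auto
  then show "red (last cyc) (hd cyc)"
    using xy px(2,4) py(2,4) red_sym unfolding cyc_def by (simp add: hd_rev)
qed

lemma red_tree_paths_joined:
  assumes U: "U1 \<subseteq> {0..<N}" "U2 \<subseteq> {0..<N}" "U1 \<inter> U2 = {}"
    "expanding U1 (2 * m1)" "expanding U2 (2 * m2)" and u: "u1 \<in> U1" "u2 \<in> U2"
    and D1: "m1 \<le> tree_size D1" "2 ^ D1 \<le> 2 * m1" and D2: "m2 \<le> tree_size D2" "2 ^ D2 \<le> 2 * m2"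
  shows "\<exists>px py. red_path red U1 px \<and> length px = Suc D1 \<and> hd px = u1 \<and>
    red_path red U2 py \<and> length py = Suc D2 \<and> hd py = u2 \<and> red (last px) (last py)"
proof -
  have "finite U1" "finite U2" using U(1,2) by (auto intro: finite_subset)
  obtain X1 B1 where T1: "X1 \<subseteq> B1" "B1 \<subseteq> U1" "card X1 = tree_size D1"
    "\<forall>x\<in>X1. \<exists>vs. red_path red B1 vs \<and> length vs = Suc D1 \<and> hd vs = u1 \<and> last vs = x"
    using red_tree[OF \<open>finite U1\<close> U(4) u(1) D1(2)] unfolding red_tree_level_def by blast
  obtain X2 B2 where T2: "X2 \<subseteq> B2" "B2 \<subseteq> U2" "card X2 = tree_size D2"
    "\<forall>x\<in>X2. \<exists>vs. red_path red B2 vs \<and> length vs = Suc D2 \<and> hd vs = u2 \<and> last vs = x"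
    using red_tree[OF \<open>finite U2\<close> U(5) u(2) D2(2)] unfolding red_tree_level_def by blast
  have "X1 \<subseteq> {0..<N}" "X2 \<subseteq> {0..<N}" "X1 \<inter> X2 = {}"
    using T1(1,2) T2(1,2) U(1-3) by blast+
  then obtain x y where xy: "x \<in> X1" "y \<in> X2" "red x y"
    using red_edge_between T1(3) T2(3) D1(1) D2(1) by metis
  obtain px where "red_path red U1 px" "length px = Suc D1" "hd px = u1" "last px = x"
    using T1(2,4) xy(1) red_path_mono by blast
  moreover obtain py where "red_path red U2 py" "length py = Suc D2" "hd py = u2" "last py = y"
    using T2(2,4) xy(2) red_path_mono by blast
  ultimately show ?thesis using xy(3) by blast
qed

text \<open>The vertices 0..<N are split into a block V holding the long red path and two blocks
  W1, W2 holding the expanding sets; their sizes are those required by long_red_path and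
  expanding_subset.\<close>

lemma red_cycle:
  assumes N: "23 * m1 + 14 * m2 \<le> N" and n: "n = D1 + D2 + s + 1" and s: "1 \<le> s" "s \<le> m2"
    and D1: "m1 \<le> tree_size D1" "2 ^ D1 \<le> 2 * m1" and D2: "m2 \<le> tree_size D2" "2 ^ D2 \<le> 2 * m2"
  shows "has_red_cycle N red n"
proof -
  define V where "V = {0..<3 * m1 + 2 * m2}"
  define W1 where "W1 = {3 * m1 + 2 * m2..<18 * m1 + 3 * m2}"
  define W2 where "W2 = {18 * m1 + 3 * m2..<23 * m1 + 14 * m2}"
  have sub: "V \<subseteq> {0..<N}" "W1 \<subseteq> {0..<N}" "W2 \<subseteq> {0..<N}"
    using N unfolding V_def W1_def W2_def by auto
  have disj: "V \<inter> W1 = {}" "V \<inter> W2 = {}" "W1 \<inter> W2 = {}"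
    unfolding V_def W1_def W2_def by auto
  obtain U1 where U1: "U1 \<subseteq> W1" "10 * m1 + m2 \<le> card U1" "expanding U1 (2 * m1)"
    using expanding_subset[OF sub(2), of "2 * m1"] unfolding W1_def by auto
  obtain U2 where U2: "U2 \<subseteq> W2" "11 * m2 \<le> card U2" "expanding U2 (2 * m2)"
    using expanding_subset[OF sub(3), of "2 * m2"] unfolding W2_def by auto
  have U_sub: "U1 \<subseteq> {0..<N}" "U2 \<subseteq> {0..<N}" using U1(1) U2(1) sub by auto
  have U_disj: "V \<inter> U1 = {}" "V \<inter> U2 = {}" "U1 \<inter> U2 = {}" using U1(1) U2(1) disj by auto
  obtain q where q: "red_path red V q" "card V < length q + m1 + m2"
    using long_red_path[OF sub(1)] unfolding V_def by auto
  have "2 * m1 + s \<le> length q" using q(2) s unfolding V_def by simp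
  then obtain u1 u2 mid where u: "u1 \<in> U1" "u2 \<in> U2" and mid: "length mid = s - 1"
    "red_path red V mid" "successively red (u1 # mid @ [u2])"
    using red_stem[OF q(1) sub(1) U_sub(1) U_disj(1) _ _ U_sub(2) U_disj(2) _ U_disj(3) s(1)]
      U1(2) U2(2) by fastforce
  obtain px py where px: "red_path red U1 px" "length px = Suc D1" "hd px = u1"
    and py: "red_path red U2 py" "length py = Suc D2" "hd py = u2" and closing: "red (last px) (last py)"
    using red_tree_paths_joined[OF U_sub U_disj(3) U1(3) U2(3) u D1 D2] by blast
  have "set px \<subseteq> U1" "set py \<subseteq> U2" "set mid \<subseteq> V"
    using px(1) py(1) mid(2) unfolding red_path_def by simp_all
  then have "set px \<inter> set mid = {}" "set px \<inter> set py = {}" "set mid \<inter> set py = {}"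
    using U_disj by blast+
  moreover have "px \<noteq> []" "py \<noteq> []" using px(2) py(2) by auto
  ultimately have "has_red_cycle N red (length px + length mid + length py)"
    using has_red_cycle_of_paths px(3) py(3) mid(3) closing
      red_path_mono[OF px(1) U_sub(1)] red_path_mono[OF py(1) U_sub(2)] red_path_mono[OF mid(2) sub(1)]
    by blast
  moreover have "length px + length mid + length py = n" using px(2) py(2) mid(1) s(1) n by simp
  ultimately show ?thesis by simp
qed

end

lemma real_of_int_ceiling_log2: "0 < m \<Longrightarrow> real_of_int \<lceil>log 2 (real m)\<rceil> = real (ceillog2 m)"
  unfolding ceillog2_def by simp

text \<open>The cycle is split into a tree path of length D1, a stem of s edges and a tree path of
  length D2. Taking D2 = ceillog2 m2 - 1 is possible because the first level of a tree
  already has four leaves.\<close>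

lemma cycle_length_split:
  assumes "0 < m1" "3 \<le> n" "n \<le> m2" and n: "ceillog2 m1 + ceillog2 m2 + 1 \<le> n"
  shows "\<exists>D1 D2 s. n = D1 + D2 + s + 1 \<and> 1 \<le> s \<and> s \<le> m2 \<and>
    m1 \<le> tree_size D1 \<and> 2 ^ D1 \<le> 2 * m1 \<and> m2 \<le> tree_size D2 \<and> 2 ^ D2 \<le> 2 * m2"
proof -
  define A where "A = ceillog2 m1"
  define B where "B = ceillog2 m2"
  have "m1 \<le> tree_size A" using le_two_power_ceillog2[of m1] two_power_le_tree_size[of A]
    unfolding A_def by linarith
  moreover have "2 ^ A \<le> 2 * m1" using two_power_ceillog2_gt[of m1] assms(1) unfolding A_def by simp
  moreover have B2: "2 \<le> B" using ceillog2_ge_iff[of m2 2] assms(2,3) unfolding B_def by simp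
  then have "m2 \<le> tree_size (B - 1)"
    using le_two_power_ceillog2[of m2] unfolding B_def tree_size_def by simp
  moreover have "2 ^ (B - 1) \<le> 2 * m2"
  proof -
    have "(2::nat) ^ (B - 1) \<le> 2 ^ B" by (rule power_increasing) simp_all
    moreover have "2 ^ B < 2 * m2" using two_power_ceillog2_gt[of m2] assms(2,3) unfolding B_def by simp
    ultimately show ?thesis by linarith
  qed
  moreover have "n = A + (B - 1) + (n - A - B) + 1" "1 \<le> n - A - B" "n - A - B \<le> m2"
    using n B2 assms(3) unfolding A_def B_def by auto
  ultimately show ?thesis by blast
qed

theorem lemma2p7:
  fixes n m1 m2 :: nat
  assumes "0 < n" "0 < m1" "0 < m2" and n3: "3 \<le> n"
    and "m2 \<ge> n"
    and "real n \<ge> of_int \<lceil>log 2 (real m1)\<rceil> + of_int \<lceil>log 2 (real m2)\<rceil> + 1"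
  shows "ramsey_cycle_Kab n m1 m2 \<le> 33 * m1 + 49 * m2"
proof -
  have "ceillog2 m1 + ceillog2 m2 + 1 \<le> n"
    using assms(6) real_of_int_ceiling_log2[OF assms(2)] real_of_int_ceiling_log2[OF assms(3)] by simp
  then obtain D1 D2 s where split: "n = D1 + D2 + s + 1" "1 \<le> s" "s \<le> m2"
    "m1 \<le> tree_size D1" "2 ^ D1 \<le> 2 * m1" "m2 \<le> tree_size D2" "2 ^ D2 \<le> 2 * m2"
    using cycle_length_split[OF assms(2) n3 assms(5)] by blast
  have "has_red_cycle (33 * m1 + 49 * m2) red n \<or> has_blue_Kab (33 * m1 + 49 * m2) red m1 m2"
    if "red_blue_colouring (33 * m1 + 49 * m2) red" for red
  proof (rule disjCI)
    assume "\<not> has_blue_Kab (33 * m1 + 49 * m2) red m1 m2"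
    then interpret no_blue_Kab "33 * m1 + 49 * m2" red m1 m2
      using no_blue_KabI that by blast
    show "has_red_cycle (33 * m1 + 49 * m2) red n"
      by (rule red_cycle[OF _ split]) simp
  qed
  then show ?thesis unfolding ramsey_cycle_Kab_def by (intro Least_le) blast
qed

end
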